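(* Let $\Gamma=(Q,A,E,(\delta_e)_{e\in E})$ be an MEMDP, $q\in Q$, and $W$ a parity objective. Then $$\mathrm{val}^{\mathrm{uni}}_q(\Gamma,W)=\inf_{b\in\mathcal D(E)}\mathrm{val}^{\mathrm{pr}}_q(\Gamma,b,W).$$
   Context: $\mathcal D(X)$ is the set of distributions on $X$ (countable support, summing to 1). An MDP $G=(Q,A,\delta)$ has finite non-empty $Q,A$ and $\delta:Q\times A\to\mathcal D(Q)$; strategies are maps $\sigma:Q\cdot(A\cdot Q)^*\to\mathcal D(A)$, $\mathrm{Strat}(Q,A)$ is their set, and $\mathbb P^\sigma_q[G,\cdot]$ is the induced probability measure on infinite runs from $q$ (infinite state sequences measured by projection). A parity objective given by $f:Q\to\mathbb N$ is the set of infinite state sequences whose maximal label seen infinitely often is even. An MEMDP is $\Gamma=(Q,A,E,(\delta_e)_{e\in E})$ with $E$ finite non-empty and each $\Gamma[e]=(Q,A,\delta_e)$ an MDP. $\mathrm{val}^{\mathrm{uni}}_q(\Gamma,W)=\sup_\sigma\min_{e\in E}\mathbb P^\sigma_q[\Gamma[e],W]$; $\mathrm{val}^{\mathrm{pr}}_q(\Gamma,b,W)=\sup_\sigma\sum_{e\in E}b(e)\,\mathbb P^\sigma_q[\Gamma[e],W]$. *)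

theory Defs
  imports "HOL-Probability.Probability"
begin

(* An MDP over finite state type 'q and finite action type 'a is given by its
   transition function  \<delta> :: 'q \<Rightarrow> 'a \<Rightarrow> 'q pmf  (pmf = distribution with countable support).
   A history in Q(AQ)^* is represented as (q0, [(a0,q1),...,(a_{n-1},q_n)]). *)

type_synonym ('q,'a) hist = "'q \<times> ('a \<times> 'q) list"
type_synonym ('q,'a) strat = "('q,'a) hist \<Rightarrow> 'a pmf"

definition hlast :: "('q,'a) hist \<Rightarrow> 'q" where
  "hlast h = (if snd h = [] then fst h else snd (last (snd h)))"

definition hist_prob :: "('q \<Rightarrow> 'a \<Rightarrow> 'q pmf) \<Rightarrow> ('q,'a) strat \<Rightarrow> ('q,'a) hist \<Rightarrow> real" where
  "hist_prob \<delta> \<sigma> h =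
     (\<Prod>i<length (snd h).
        let hi = (fst h, take i (snd h)); (a, q') = snd h ! i
        in pmf (\<sigma> hi) a * pmf (\<delta> (hlast hi) a) q')"

(* probability of the cylinder of infinite state sequences starting with the
   finite state sequence xs, for runs from q (actions projected away) *)
definition cyl_prob :: "('q \<Rightarrow> 'a \<Rightarrow> 'q pmf) \<Rightarrow> ('q,'a) strat \<Rightarrow> 'q \<Rightarrow> 'q list \<Rightarrow> real" where
  "cyl_prob \<delta> \<sigma> q xs =
     (case xs of [] \<Rightarrow> 1
      | q0 # qs \<Rightarrow> (if q0 = q then
           (\<Sum>as\<in>{as. length as = length qs}. hist_prob \<delta> \<sigma> (q0, zip as qs))
         else 0))"

(* the induced probability measure P^\<sigma>_q[G,-] on infinite state sequences:
   the (unique) probability measure on the stream sigma-algebra with the above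
   cylinder probabilities *)
definition run_measure :: "('q \<Rightarrow> 'a \<Rightarrow> 'q pmf) \<Rightarrow> ('q,'a) strat \<Rightarrow> 'q \<Rightarrow> 'q stream measure" where
  "run_measure \<delta> \<sigma> q =
     (THE M. sets M = sets (stream_space (count_space UNIV)) \<and> prob_space M \<and>
        (\<forall>xs. emeasure M (sstart UNIV xs) = ennreal (cyl_prob \<delta> \<sigma> q xs)))"

definition Pr :: "('q \<Rightarrow> 'a \<Rightarrow> 'q pmf) \<Rightarrow> ('q,'a) strat \<Rightarrow> 'q \<Rightarrow> 'q stream set \<Rightarrow> real" where
  "Pr \<delta> \<sigma> q W = measure (run_measure \<delta> \<sigma> q) W"

definition parity :: "('q::finite \<Rightarrow> nat) \<Rightarrow> 'q stream set" where
  "parity f = {\<omega>. even (Max (f ` {x. \<exists>\<^sub>\<infinity>n. \<omega> !! n = x}))}"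

(* MEMDP: \<Gamma> :: 'e \<Rightarrow> 'q \<Rightarrow> 'a \<Rightarrow> 'q pmf, environment type 'e finite (non-empty) *)
definition val_uni :: "('e::finite \<Rightarrow> 'q \<Rightarrow> 'a \<Rightarrow> 'q pmf) \<Rightarrow> 'q \<Rightarrow> 'q stream set \<Rightarrow> real" where
  "val_uni \<Gamma> q W = (SUP \<sigma>. Min ((\<lambda>e. Pr (\<Gamma> e) \<sigma> q W) ` UNIV))"

definition val_pr :: "('e::finite \<Rightarrow> 'q \<Rightarrow> 'a \<Rightarrow> 'q pmf) \<Rightarrow> 'q \<Rightarrow> 'e pmf \<Rightarrow> 'q stream set \<Rightarrow> real" where
  "val_pr \<Gamma> q b W = (SUP \<sigma>. \<Sum>e\<in>UNIV. pmf b e * Pr (\<Gamma> e) \<sigma> q W)"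

end

theory Submission
  imports Defs
begin

(* Let x\<sigma> be the vector of winning probabilities (P\<^sup>\<sigma>\<^sub>q[\<Gamma>[e], W]) indexed by e.  The uniform value is
   sup_\<sigma> min_e x\<sigma>(e) and the right-hand side is inf_b sup_\<sigma> \<Sum>_e b(e) x\<sigma>(e), so the claim is a
   minimax theorem for the set of vectors x\<sigma>.  This set is convex: a p-biased coin flip between
   \<sigma>\<^sub>1 and \<sigma>\<^sub>2 is simulated by one strategy that, after every history, follows \<sigma>\<^sub>1 with the
   posterior probability that \<sigma>\<^sub>1 was drawn; its run measure agrees on all cylinders, hence
   everywhere, with the p-mixture of the two run measures.  Weak duality is immediate.  For the
   converse, a hyperplane separating the vectors x\<sigma> from the open orthant above the uniform
   value v has a nonnegative normal, and the normalised normal is a belief b with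
   sup_\<sigma> \<Sum>_e b(e) x\<sigma>(e) \<le> v. *)

section \<open>A finite-dimensional minimax theorem\<close>

lemma sum_pmf_UNIV [simp]: "(\<Sum>e\<in>UNIV. pmf b e) = (1::real)" for b :: "'e::finite pmf"
  by (rule sum_pmf_eq_1) auto

lemma Min_le_pmf_weighted_sum:
  fixes x :: "'e::finite \<Rightarrow> real"
  shows "Min (range x) \<le> (\<Sum>e\<in>UNIV. pmf b e * x e)"
proof -
  have "Min (range x) = (\<Sum>e\<in>UNIV. pmf b e * Min (range x))"
    by (simp flip: sum_distrib_right)
  also have "\<dots> \<le> (\<Sum>e\<in>UNIV. pmf b e * x e)"
    by (intro sum_mono mult_left_mono) auto
  finally show ?thesis .
qed

lemma pmf_weighted_sum_le_Max:
  fixes x :: "'e::finite \<Rightarrow> real"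
  shows "(\<Sum>e\<in>UNIV. pmf b e * x e) \<le> Max (range x)"
proof -
  have "(\<Sum>e\<in>UNIV. pmf b e * x e) \<le> (\<Sum>e\<in>UNIV. pmf b e * Max (range x))"
    by (intro sum_mono mult_left_mono) auto
  also have "\<dots> = Max (range x)"
    by (simp flip: sum_distrib_right)
  finally show ?thesis .
qed

lemma obtain_pmf_proportional:
  fixes w :: "'e::finite \<Rightarrow> real"
  assumes nonneg: "\<And>e. 0 \<le> w e" and pos: "0 < sum w UNIV"
  obtains b where "\<And>e. pmf b e = w e / sum w UNIV"
proof
  fix e
  show "pmf (embed_pmf (\<lambda>e. w e / sum w UNIV)) e = w e / sum w UNIV"
  proof (rule pmf_embed_pmf)
    have "(\<integral>\<^sup>+ e. ennreal (w e / sum w UNIV) \<partial>count_space UNIV) = ennreal (\<Sum>e\<in>UNIV. w e / sum w UNIV)"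
      using nonneg pos by (simp add: nn_integral_count_space_finite sum_ennreal)
    then show "(\<integral>\<^sup>+ e. ennreal (w e / sum w UNIV) \<partial>count_space UNIV) = 1"
      using pos by (simp flip: sum_divide_distrib)
  qed (use nonneg pos in simp)
qed

context
  fixes a :: "real^'e::finite" and c v :: real
  assumes inner_ge_on_orthant: "\<And>x. (\<forall>e. v < x $ e) \<Longrightarrow> c \<le> a \<bullet> x"
begin

lemma orthant_normal_nonneg: "0 \<le> a $ k"
proof (rule ccontr)
  assume "\<not> 0 \<le> a $ k"
  define y :: "real^'e" where "y = (\<chi> e. v + 1)"
  define t where "t = (\<bar>a \<bullet> y - c\<bar> + 1) / - (a $ k)"
  have "0 \<le> t"
    unfolding t_def by (rule divide_nonneg_pos) (use \<open>\<not> 0 \<le> a $ k\<close> in auto)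
  then have "c \<le> a \<bullet> (y + t *\<^sub>R axis k 1)"
    by (intro inner_ge_on_orthant) (simp add: y_def axis_def add_pos_nonneg)
  also have "a \<bullet> (y + t *\<^sub>R axis k 1) = a \<bullet> y + t * a $ k"
    by (simp add: inner_add_right inner_axis)
  also have "t * a $ k = - (\<bar>a \<bullet> y - c\<bar> + 1)"
    using \<open>\<not> 0 \<le> a $ k\<close> by (simp add: t_def)
  finally show False
    by linarith
qed

lemma orthant_bound_le: "c \<le> v * sum (($) a) UNIV"
proof (rule field_le_epsilon)
  fix \<epsilon> :: real
  assume "0 < \<epsilon>"
  define A where "A = sum (($) a) UNIV + 1"
  have "0 < A"
    unfolding A_def using orthant_normal_nonneg by (simp add: add_nonneg_pos sum_nonneg)
  have "c \<le> a \<bullet> (\<chi> e. v + \<epsilon> / A)"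
    using \<open>0 < \<epsilon>\<close> \<open>0 < A\<close> by (intro inner_ge_on_orthant) simp
  also have "\<dots> = (v + \<epsilon> / A) * sum (($) a) UNIV"
    by (simp add: inner_vec_def sum_distrib_right mult.commute)
  also have "\<dots> \<le> v * sum (($) a) UNIV + \<epsilon>"
    using \<open>0 < \<epsilon>\<close> \<open>0 < A\<close> orthant_normal_nonneg
    by (simp add: A_def distrib_right field_simps sum_nonneg)
  finally show "c \<le> v * sum (($) a) UNIV + \<epsilon>" .
qed

end

lemma convex_ex_pmf_weighted_sum_le:
  fixes C :: "(real^'e::finite) set"
  assumes "convex C" and below: "\<And>x. x \<in> C \<Longrightarrow> \<exists>e. x $ e \<le> v"
  shows "\<exists>b :: 'e pmf. \<forall>x\<in>C. (\<Sum>e\<in>UNIV. pmf b e * x $ e) \<le> v"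
proof (cases "C = {}")
  case False
  define U :: "(real^'e) set" where "U = {x. \<forall>e. v < x $ e}"
  have "U = (\<Inter>e. {x. v < axis e 1 \<bullet> x})"
    by (auto simp: U_def inner_axis')
  then have "convex U"
    by (simp add: convex_INT convex_halfspace_gt)
  moreover have "(\<chi> e. v + 1) \<in> U"
    by (simp add: U_def)
  moreover have "C \<inter> U = {}"
    unfolding U_def using below by (metis (mono_tags) disjoint_iff mem_Collect_eq not_less)
  ultimately obtain a c where "a \<noteq> 0" and C: "\<forall>x\<in>C. a \<bullet> x \<le> c" and U: "\<forall>x\<in>U. c \<le> a \<bullet> x"
    using separating_hyperplane_sets[OF \<open>convex C\<close>, of U] False by blast
  then have U': "\<And>x. (\<forall>e. v < x $ e) \<Longrightarrow> c \<le> a \<bullet> x"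
    by (simp add: U_def)
  note a_nonneg = orthant_normal_nonneg[OF U']
  define A where "A = sum (($) a) UNIV"
  have "0 < A"
  proof -
    obtain k where "a $ k \<noteq> 0"
      using \<open>a \<noteq> 0\<close> by (auto simp: vec_eq_iff)
    then show ?thesis
      unfolding A_def using a_nonneg by (intro sum_pos2[of UNIV k]) (auto simp: order_less_le)
  qed
  obtain b where b: "\<And>e. pmf b e = a $ e / A"
    using obtain_pmf_proportional[of "($) a"] a_nonneg \<open>0 < A\<close> by (auto simp: A_def)
  show ?thesis
  proof (intro exI ballI)
    fix x assume "x \<in> C"
    have "(\<Sum>e\<in>UNIV. pmf b e * x $ e) = (a \<bullet> x) / A"
      by (simp add: b inner_vec_def sum_divide_distrib)
    also have "\<dots> \<le> v"
    proof -
      have "a \<bullet> x \<le> v * A"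
        using C \<open>x \<in> C\<close> orthant_bound_le[OF U'] unfolding A_def by (meson order_trans)
      then show ?thesis
        using \<open>0 < A\<close> by (simp add: divide_le_eq)
    qed
    finally show "(\<Sum>e\<in>UNIV. pmf b e * x $ e) \<le> v" .
  qed
qed simp

lemma convex_range_vec_lambda:
  fixes P :: "'s \<Rightarrow> 'e::finite \<Rightarrow> real"
  assumes mixable: "\<And>s\<^sub>1 s\<^sub>2 u. 0 \<le> u \<Longrightarrow> u \<le> 1 \<Longrightarrow> \<exists>s. \<forall>e. P s e = u * P s\<^sub>1 e + (1 - u) * P s\<^sub>2 e"
  shows "convex (range (\<lambda>s. \<chi> e. P s e))"
proof (rule convexI)
  fix x y and u w :: real
  assume "x \<in> range (\<lambda>s. \<chi> e. P s e)" "y \<in> range (\<lambda>s. \<chi> e. P s e)"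
    and uw: "0 \<le> u" "0 \<le> w" "u + w = 1"
  then obtain s\<^sub>1 s\<^sub>2 where x: "x = (\<chi> e. P s\<^sub>1 e)" and y: "y = (\<chi> e. P s\<^sub>2 e)"
    by blast
  obtain s where "\<forall>e. P s e = u * P s\<^sub>1 e + (1 - u) * P s\<^sub>2 e"
    using mixable[of u s\<^sub>1 s\<^sub>2] uw by auto
  then have "u *\<^sub>R x + w *\<^sub>R y = (\<chi> e. P s e)"
    using uw by (simp add: x y vec_eq_iff)
  then show "u *\<^sub>R x + w *\<^sub>R y \<in> range (\<lambda>s. \<chi> e. P s e)"
    by (metis rangeI)
qed

context
  fixes P :: "'s \<Rightarrow> 'e::finite \<Rightarrow> real" and B :: real
  assumes bounded: "\<And>s e. \<bar>P s e\<bar> \<le> B"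
begin

lemma bdd_above_range_Min: "bdd_above (range (\<lambda>s. Min (range (P s))))"
proof (rule bdd_aboveI)
  fix m assume "m \<in> range (\<lambda>s. Min (range (P s)))"
  then obtain s where "m = Min (range (P s))"
    by blast
  then show "m \<le> B"
    using abs_le_D1[OF bounded[of s undefined]] by (auto simp: Min_le_iff)
qed

lemma bdd_above_range_pmf_weighted_sum: "bdd_above (range (\<lambda>s. \<Sum>e\<in>UNIV. pmf b e * P s e))"
proof -
  have Max_le: "Max (range (P s)) \<le> B" for s
    using bounded by (simp add: abs_le_iff)
  show ?thesis
    using order_trans[OF pmf_weighted_sum_le_Max Max_le] by (intro bdd_aboveI[of _ B]) auto
qed

lemma bdd_below_range_SUP_pmf_weighted_sum:
  "bdd_below (range (\<lambda>b. SUP s. \<Sum>e\<in>UNIV. pmf b e * P s e))"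
proof -
  have B_le_Min: "- B \<le> Min (range (P s))" for s
    using bounded by (simp add: abs_le_iff minus_le_iff)
  have "- B \<le> (SUP s. \<Sum>e\<in>UNIV. pmf b e * P s e)" for b
    by (rule cSUP_upper2[OF bdd_above_range_pmf_weighted_sum UNIV_I order_trans[OF B_le_Min Min_le_pmf_weighted_sum]])
  then show ?thesis
    by (intro bdd_belowI[of _ "- B"]) auto
qed

lemma SUP_Min_le_INF_SUP_pmf_weighted_sum:
  "(SUP s. Min (range (P s))) \<le> (INF b. SUP s. \<Sum>e\<in>UNIV. pmf b e * P s e)"
  by (intro cINF_greatest cSUP_mono bdd_above_range_pmf_weighted_sum)
     (auto intro: Min_le_pmf_weighted_sum)

lemma INF_SUP_pmf_weighted_sum_le_SUP_Min:
  assumes "convex (range (\<lambda>s. \<chi> e. P s e))"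
  shows "(INF b. SUP s. \<Sum>e\<in>UNIV. pmf b e * P s e) \<le> (SUP s. Min (range (P s)))"
proof -
  define v where "v = (SUP s. Min (range (P s)))"
  have below: "\<exists>e. x $ e \<le> v" if "x \<in> range (\<lambda>s. \<chi> e. P s e)" for x
  proof -
    obtain s where x: "x = (\<chi> e. P s e)"
      using \<open>x \<in> range _\<close> by blast
    have "Min (range (P s)) \<in> range (P s)"
      by (rule Min_in) auto
    moreover have "Min (range (P s)) \<le> v"
      unfolding v_def by (rule cSUP_upper[OF _ bdd_above_range_Min]) simp
    ultimately show ?thesis
      unfolding x by (metis rangeE vec_lambda_beta)
  qed
  obtain b where b: "\<forall>x\<in>range (\<lambda>s. \<chi> e. P s e). (\<Sum>e\<in>UNIV. pmf b e * x $ e) \<le> v"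
    using convex_ex_pmf_weighted_sum_le[OF assms below] by blast
  have "(INF b. SUP s. \<Sum>e\<in>UNIV. pmf b e * P s e) \<le> (SUP s. \<Sum>e\<in>UNIV. pmf b e * P s e)"
    by (rule cINF_lower[OF bdd_below_range_SUP_pmf_weighted_sum]) simp
  also have "\<dots> \<le> v"
    using b by (intro cSUP_least) auto
  finally show ?thesis
    unfolding v_def .
qed

end

theorem SUP_Min_eq_INF_SUP_pmf_weighted_sum:
  fixes P :: "'s \<Rightarrow> 'e::finite \<Rightarrow> real"
  assumes "\<And>s e. \<bar>P s e\<bar> \<le> B"
    and "\<And>s\<^sub>1 s\<^sub>2 u. 0 \<le> u \<Longrightarrow> u \<le> 1 \<Longrightarrow> \<exists>s. \<forall>e. P s e = u * P s\<^sub>1 e + (1 - u) * P s\<^sub>2 e"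
  shows "(SUP s. Min (range (P s))) = (INF b. SUP s. \<Sum>e\<in>UNIV. pmf b e * P s e)"
  using SUP_Min_le_INF_SUP_pmf_weighted_sum[OF assms(1)]
    INF_SUP_pmf_weighted_sum_le_SUP_Min[OF assms(1) convex_range_vec_lambda[OF assms(2)]]
  by (rule antisym)

section \<open>Mixtures of distributions\<close>

definition mix_pmf :: "real \<Rightarrow> 'a pmf \<Rightarrow> 'a pmf \<Rightarrow> 'a pmf" where
  "mix_pmf r A B = bind_pmf (bernoulli_pmf r) (\<lambda>b. if b then A else B)"

lemma pmf_mix_pmf: "0 \<le> r \<Longrightarrow> r \<le> 1 \<Longrightarrow> pmf (mix_pmf r A B) x = r * pmf A x + (1 - r) * pmf B x"
  unfolding mix_pmf_def pmf_bind by (subst integral_bernoulli_pmf) auto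

lemma pmf_mix_pmf_weighted:
  assumes "0 \<le> s" and "0 \<le> t"
  shows "(s + t) * pmf (mix_pmf (s / (s + t)) A B) x = s * pmf A x + t * pmf B x"
proof (cases "s + t = 0")
  case False
  then have "0 < s + t"
    using assms by linarith
  then have r: "0 \<le> s / (s + t)" "s / (s + t) \<le> 1" "(s + t) * (s / (s + t)) = s" "(s + t) * (1 - s / (s + t)) = t"
    using assms by (simp_all add: field_simps)
  have "(s + t) * pmf (mix_pmf (s / (s + t)) A B) x =
      ((s + t) * (s / (s + t))) * pmf A x + ((s + t) * (1 - s / (s + t))) * pmf B x"
    using r(1,2) by (simp add: pmf_mix_pmf algebra_simps)
  then show ?thesis
    unfolding r(3,4) .
qed (use assms in \<open>simp add: add_nonneg_eq_0_iff\<close>)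

definition mix_measure :: "real \<Rightarrow> 'a measure \<Rightarrow> 'a measure \<Rightarrow> 'a measure" where
  "mix_measure p M\<^sub>1 M\<^sub>2 = measure_pmf (bernoulli_pmf p) \<bind> (\<lambda>b. if b then M\<^sub>1 else M\<^sub>2)"

context
  fixes M\<^sub>1 M\<^sub>2 :: "'a measure"
  assumes prob: "prob_space M\<^sub>1" "prob_space M\<^sub>2" and sets_eq: "sets M\<^sub>2 = sets M\<^sub>1"
begin

lemma measurable_mix_measure_kernel:
  "(\<lambda>b. if b then M\<^sub>1 else M\<^sub>2) \<in> bernoulli_pmf p \<rightarrow>\<^sub>M subprob_algebra M\<^sub>1"
  using prob_space_imp_subprob_space[OF prob(1)] prob_space_imp_subprob_space[OF prob(2)] sets_eq
  unfolding measurable_pmf_measure1 by (simp add: space_subprob_algebra)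

lemma sets_mix_measure: "sets (mix_measure p M\<^sub>1 M\<^sub>2) = sets M\<^sub>1"
  unfolding mix_measure_def by (rule sets_bind_measurable[OF measurable_mix_measure_kernel]) simp

lemma prob_space_mix_measure: "prob_space (mix_measure p M\<^sub>1 M\<^sub>2)"
  unfolding mix_measure_def
  by (rule measure_pmf.prob_space_bind[OF _ measurable_mix_measure_kernel]) (simp add: prob)

lemma emeasure_mix_measure:
  assumes "0 \<le> p" "p \<le> 1" "X \<in> sets M\<^sub>1"
  shows "emeasure (mix_measure p M\<^sub>1 M\<^sub>2) X = ennreal p * emeasure M\<^sub>1 X + ennreal (1 - p) * emeasure M\<^sub>2 X"
  unfolding mix_measure_def
  by (simp add: emeasure_bind[OF _ measurable_mix_measure_kernel assms(3)] nn_integral_bernoulli_pmf assms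
      mult.commute)

lemma measure_mix_measure:
  assumes "0 \<le> p" "p \<le> 1"
  shows "measure (mix_measure p M\<^sub>1 M\<^sub>2) X = p * measure M\<^sub>1 X + (1 - p) * measure M\<^sub>2 X"
proof (cases "X \<in> sets M\<^sub>1")
  case True
  interpret M\<^sub>1: prob_space M\<^sub>1 by (rule prob(1))
  interpret M\<^sub>2: prob_space M\<^sub>2 by (rule prob(2))
  interpret M: prob_space "mix_measure p M\<^sub>1 M\<^sub>2" by (rule prob_space_mix_measure)
  have "ennreal (measure (mix_measure p M\<^sub>1 M\<^sub>2) X) = ennreal (p * measure M\<^sub>1 X + (1 - p) * measure M\<^sub>2 X)"
    using emeasure_mix_measure[OF assms True] assms True sets_eq
    by (simp add: M.emeasure_eq_measure M\<^sub>1.emeasure_eq_measure M\<^sub>2.emeasure_eq_measure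
        ennreal_plus ennreal_mult)
  then show ?thesis
    using assms by (subst (asm) ennreal_inj) auto
next
  case False
  then show ?thesis
    using sets_eq by (simp add: measure_notin_sets sets_mix_measure)
qed

end

section \<open>The run measure as the image of independent choices\<close>

definition next_pmf :: "('q \<Rightarrow> 'a \<Rightarrow> 'q pmf) \<Rightarrow> ('q,'a) strat \<Rightarrow> ('q,'a) hist \<Rightarrow> ('a \<times> 'q) pmf" where
  "next_pmf \<delta> \<sigma> h = bind_pmf (\<sigma> h) (\<lambda>a. map_pmf (Pair a) (\<delta> (hlast h) a))"

lemma pmf_next_pmf: "pmf (next_pmf \<delta> \<sigma> h) (a, q') = pmf (\<sigma> h) a * pmf (\<delta> (hlast h) a) q'"
proof -
  have "pmf (map_pmf (Pair x) (\<delta> (hlast h) x)) (a, q') = indicator {a} x * pmf (\<delta> (hlast h) a) q'" for x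
    by (cases "x = a") (auto simp: pmf_map_inj' inj_on_def pmf_eq_0_set_pmf)
  then show ?thesis
    by (simp add: next_pmf_def pmf_bind measure_pmf_single)
qed

primrec gen_hist :: "(('q,'a) hist \<Rightarrow> 'a \<times> 'q) \<Rightarrow> 'q \<Rightarrow> nat \<Rightarrow> ('q,'a) hist" where
  "gen_hist \<omega> q 0 = (q, [])"
| "gen_hist \<omega> q (Suc n) = (q, snd (gen_hist \<omega> q n) @ [\<omega> (gen_hist \<omega> q n)])"

definition hist_event :: "'q \<Rightarrow> ('a \<times> 'q) list \<Rightarrow> (('q,'a) hist \<Rightarrow> 'a \<times> 'q) set" where
  "hist_event q ys = {\<omega>. \<forall>j<length ys. \<omega> (q, take j ys) = ys ! j}"

lemma fst_gen_hist [simp]: "fst (gen_hist \<omega> q n) = q"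
  by (cases n) auto

lemma snd_gen_hist: "snd (gen_hist \<omega> q n) = map (\<lambda>j. \<omega> (gen_hist \<omega> q j)) [0..<n]"
  by (induction n) auto

lemma gen_hist_eq_take: "j \<le> n \<Longrightarrow> gen_hist \<omega> q j = (q, take j (snd (gen_hist \<omega> q n)))"
  by (simp add: snd_gen_hist take_map prod_eq_iff min_def)

lemma snd_gen_hist_eq_iff:
  "snd (gen_hist \<omega> q n) = ys \<longleftrightarrow> length ys = n \<and> \<omega> \<in> hist_event q ys"
proof
  assume ys: "snd (gen_hist \<omega> q n) = ys"
  have "\<omega> (q, take j ys) = ys ! j" if "j < n" for j
    using gen_hist_eq_take[of j n \<omega> q] that by (simp add: ys[symmetric] snd_gen_hist)
  then show "length ys = n \<and> \<omega> \<in> hist_event q ys"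
    using ys by (auto simp: hist_event_def snd_gen_hist)
next
  assume ys: "length ys = n \<and> \<omega> \<in> hist_event q ys"
  have "gen_hist \<omega> q j = (q, take j ys)" if "j \<le> n" for j
    using that
  proof (induction j)
    case (Suc j)
    then show ?case
      using ys by (simp add: hist_event_def take_Suc_conv_app_nth)
  qed simp
  then show "snd (gen_hist \<omega> q n) = ys"
    using ys by simp
qed

lemma hist_event_disjoint:
  assumes "length ys = length ys'" and "ys \<noteq> ys'"
  shows "hist_event q ys \<inter> hist_event q ys' = {}"
  using assms by (metis disjoint_iff snd_gen_hist_eq_iff)

(* A sample point \<omega> fixes in advance the next action and successor state for every history; the
   run from q feeds the history generated so far back into \<omega>.  Under the product of the
   next_pmf distributions these choices are independent, so the run has the law induced by \<sigma>;
   this supplies the measure whose existence the definition of run_measure presupposes. *)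
definition choice_space :: "('q \<Rightarrow> 'a \<Rightarrow> 'q pmf) \<Rightarrow> ('q,'a) strat \<Rightarrow> (('q,'a) hist \<Rightarrow> 'a \<times> 'q) measure" where
  "choice_space \<delta> \<sigma> = PiM UNIV (\<lambda>h. measure_pmf (next_pmf \<delta> \<sigma> h))"

definition gen_run :: "(('q,'a) hist \<Rightarrow> 'a \<times> 'q) \<Rightarrow> 'q \<Rightarrow> 'q stream" where
  "gen_run \<omega> q = to_stream (\<lambda>n. hlast (gen_hist \<omega> q n))"

definition run_distr :: "('q \<Rightarrow> 'a \<Rightarrow> 'q pmf) \<Rightarrow> ('q,'a) strat \<Rightarrow> 'q \<Rightarrow> 'q stream measure" where
  "run_distr \<delta> \<sigma> q = distr (choice_space \<delta> \<sigma>) (stream_space (count_space UNIV)) (\<lambda>\<omega>. gen_run \<omega> q)"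

lemma space_choice_space [simp]: "space (choice_space \<delta> \<sigma>) = UNIV"
  by (simp add: choice_space_def space_PiM)

lemma prob_space_choice_space: "prob_space (choice_space \<delta> \<sigma>)"
  unfolding choice_space_def by (intro prob_space_PiM prob_space_measure_pmf)

lemma hist_event_eq_prod_emb:
  "hist_event q ys = prod_emb UNIV (\<lambda>h. measure_pmf (next_pmf \<delta> \<sigma> h)) ((\<lambda>j. (q, take j ys)) ` {..<length ys})
     (PiE ((\<lambda>j. (q, take j ys)) ` {..<length ys}) (\<lambda>h. {ys ! length (snd h)}))"
  by (auto simp: hist_event_def prod_emb_def space_PiM PiE_iff)

lemma hist_event_in_sets: "hist_event q ys \<in> sets (choice_space \<delta> \<sigma>)"
  unfolding choice_space_def hist_event_eq_prod_emb[where \<delta>=\<delta> and \<sigma>=\<sigma>] by (rule sets_PiM_I) auto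

lemma emeasure_hist_event:
  "emeasure (choice_space \<delta> \<sigma>) (hist_event q ys) = ennreal (hist_prob \<delta> \<sigma> (q, ys))"
proof -
  have inj: "inj_on (\<lambda>j. (q, take j ys)) {..<length ys}"
    by (auto simp: inj_on_def dest!: arg_cong[of _ _ length])
  have "emeasure (choice_space \<delta> \<sigma>) (hist_event q ys) =
      (\<Prod>h\<in>(\<lambda>j. (q, take j ys)) ` {..<length ys}. emeasure (measure_pmf (next_pmf \<delta> \<sigma> h)) {ys ! length (snd h)})"
    unfolding choice_space_def hist_event_eq_prod_emb[where \<delta>=\<delta> and \<sigma>=\<sigma>]
    by (rule emeasure_PiM_emb) (auto intro: prob_space_measure_pmf)
  also have "\<dots> = ennreal (\<Prod>j<length ys. pmf (next_pmf \<delta> \<sigma> (q, take j ys)) (ys ! j))"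
    by (subst prod.reindex[OF inj]) (auto simp: emeasure_pmf_single prod_ennreal intro!: prod.cong)
  also have "(\<Prod>j<length ys. pmf (next_pmf \<delta> \<sigma> (q, take j ys)) (ys ! j)) = hist_prob \<delta> \<sigma> (q, ys)"
    unfolding hist_prob_def by (auto intro!: prod.cong simp: Let_def split_beta pmf_next_pmf[symmetric])
  finally show ?thesis .
qed

lemma gen_hist_measurable:
  fixes \<delta> :: "'q::countable \<Rightarrow> 'a::countable \<Rightarrow> 'q pmf"
  shows "(\<lambda>\<omega>. gen_hist \<omega> q n) \<in> choice_space \<delta> \<sigma> \<rightarrow>\<^sub>M count_space UNIV"
proof (rule measurable_count_space_eq_countable[THEN iffD2], simp, safe)
  fix q' :: 'q and ys :: "('a \<times> 'q) list"
  have "(\<lambda>\<omega>. gen_hist \<omega> q n) -` {(q', ys)} = (if q' = q \<and> length ys = n then hist_event q ys else {})"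
    by (auto simp: prod_eq_iff snd_gen_hist_eq_iff)
  then show "(\<lambda>\<omega>. gen_hist \<omega> q n) -` {(q', ys)} \<inter> space (choice_space \<delta> \<sigma>) \<in> sets (choice_space \<delta> \<sigma>)"
    by (simp add: hist_event_in_sets)
qed simp

lemma gen_run_measurable:
  fixes \<delta> :: "'q::countable \<Rightarrow> 'a::countable \<Rightarrow> 'q pmf"
  shows "(\<lambda>\<omega>. gen_run \<omega> q) \<in> choice_space \<delta> \<sigma> \<rightarrow>\<^sub>M stream_space (count_space UNIV)"
proof -
  have "(\<lambda>\<omega> n. hlast (gen_hist \<omega> q n)) \<in> choice_space \<delta> \<sigma> \<rightarrow>\<^sub>M PiM UNIV (\<lambda>_. count_space UNIV)"
    by (rule measurable_PiM_single') (auto intro: measurable_compose[OF gen_hist_measurable] simp: space_PiM)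
  then show ?thesis
    unfolding gen_run_def by (rule measurable_compose) (rule measurable_to_stream)
qed

lemma gen_run_in_sstart_iff:
  "gen_run \<omega> q \<in> sstart UNIV (x # qs) \<longleftrightarrow>
     x = q \<and> (\<exists>as. length as = length qs \<and> \<omega> \<in> hist_event q (zip as qs))"
proof -
  have "gen_run \<omega> q \<in> sstart UNIV (x # qs) \<longleftrightarrow> (\<forall>i<Suc (length qs). gen_run \<omega> q !! i = (x # qs) ! i)"
    using sstart_eq[of "gen_run \<omega> q" UNIV "x # qs"] by simp
  also have "\<dots> \<longleftrightarrow> x = q \<and> (\<forall>j<length qs. snd (\<omega> (gen_hist \<omega> q j)) = qs ! j)"
    unfolding All_less_Suc2 by (auto simp: gen_run_def to_stream_def hlast_def)
  also have "(\<forall>j<length qs. snd (\<omega> (gen_hist \<omega> q j)) = qs ! j) \<longleftrightarrow>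
      (\<exists>as. length as = length qs \<and> \<omega> \<in> hist_event q (zip as qs))"
  proof
    assume qs: "\<forall>j<length qs. snd (\<omega> (gen_hist \<omega> q j)) = qs ! j"
    define ys where "ys = snd (gen_hist \<omega> q (length qs))"
    have "map snd ys = qs"
      using qs by (auto simp: ys_def snd_gen_hist intro!: nth_equalityI)
    then have "zip (map fst ys) qs = ys"
      by (metis zip_map_fst_snd)
    moreover have "\<omega> \<in> hist_event q ys"
      using snd_gen_hist_eq_iff[of \<omega> q "length qs" ys] ys_def by simp
    ultimately show "\<exists>as. length as = length qs \<and> \<omega> \<in> hist_event q (zip as qs)"
      by (metis \<open>map snd ys = qs\<close> length_map)
  next
    assume "\<exists>as. length as = length qs \<and> \<omega> \<in> hist_event q (zip as qs)"
    then obtain as where "length as = length qs" "snd (gen_hist \<omega> q (length qs)) = zip as qs"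
      by (auto simp: snd_gen_hist_eq_iff)
    then show "\<forall>j<length qs. snd (\<omega> (gen_hist \<omega> q j)) = qs ! j"
      by (metis (no_types, lifting) diff_zero length_upt nth_map nth_upt plus_nat.add_0 snd_gen_hist nth_zip snd_conv)
  qed
  finally show ?thesis .
qed

lemma sets_run_distr:
  "sets (run_distr \<delta> \<sigma> q) = sets (stream_space (count_space UNIV))"
  by (simp add: run_distr_def)

lemma prob_space_run_distr:
  fixes \<delta> :: "'q::countable \<Rightarrow> 'a::countable \<Rightarrow> 'q pmf"
  shows "prob_space (run_distr \<delta> \<sigma> q)"
  unfolding run_distr_def
  by (rule prob_space.prob_space_distr[OF prob_space_choice_space gen_run_measurable])

lemma hist_prob_nonneg: "0 \<le> hist_prob \<delta> \<sigma> h"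
  unfolding hist_prob_def by (auto intro!: prod_nonneg simp: Let_def split_beta)

lemma cyl_prob_nonneg: "0 \<le> cyl_prob \<delta> \<sigma> q xs"
  unfolding cyl_prob_def by (auto split: list.splits intro!: sum_nonneg hist_prob_nonneg)

lemma emeasure_run_distr_sstart:
  fixes \<delta> :: "'q::countable \<Rightarrow> 'a::finite \<Rightarrow> 'q pmf"
  shows "emeasure (run_distr \<delta> \<sigma> q) (sstart UNIV xs) = ennreal (cyl_prob \<delta> \<sigma> q xs)"
proof -
  interpret prob_space "choice_space \<delta> \<sigma>"
    by (rule prob_space_choice_space)
  have em: "emeasure (run_distr \<delta> \<sigma> q) (sstart UNIV xs) =
      emeasure (choice_space \<delta> \<sigma>) ((\<lambda>\<omega>. gen_run \<omega> q) -` sstart UNIV xs)"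
    unfolding run_distr_def by (subst emeasure_distr[OF gen_run_measurable sstart_sets]) simp
  show ?thesis
  proof (cases xs)
    case Nil
    then show ?thesis
      using em emeasure_space_1 by (simp add: cyl_prob_def)
  next
    case (Cons x qs)
    define A where "A = {as :: 'a list. length as = length qs}"
    have "finite A"
      unfolding A_def using finite_lists_length_eq[of "UNIV :: 'a set" "length qs"] by simp
    have "disjoint_family_on (\<lambda>as. hist_event q (zip as qs)) A"
      by (auto simp: A_def disjoint_family_on_def intro!: hist_event_disjoint dest!: arg_cong[of _ _ "map fst"])
    show ?thesis
    proof (cases "x = q")
      case True
      have "(\<lambda>\<omega>. gen_run \<omega> q) -` sstart UNIV xs = (\<Union>as\<in>A. hist_event q (zip as qs))"
        unfolding Cons True A_def using gen_run_in_sstart_iff[of _ q q qs] by blast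
      then have "emeasure (run_distr \<delta> \<sigma> q) (sstart UNIV xs) =
          (\<Sum>as\<in>A. emeasure (choice_space \<delta> \<sigma>) (hist_event q (zip as qs)))"
        using em \<open>finite A\<close> \<open>disjoint_family_on _ A\<close>
        by (simp add: sum_emeasure hist_event_in_sets subset_eq)
      also have "\<dots> = ennreal (\<Sum>as\<in>A. hist_prob \<delta> \<sigma> (q, zip as qs))"
        by (simp add: emeasure_hist_event sum_ennreal hist_prob_nonneg)
      finally show ?thesis
        by (simp add: Cons True A_def cyl_prob_def)
    next
      case False
      then have no_run: "(\<lambda>\<omega>. gen_run \<omega> q) -` sstart UNIV xs = {}"
        unfolding Cons using gen_run_in_sstart_iff[of _ q x qs] by blast
      then show ?thesis
        unfolding em no_run using False by (simp add: Cons cyl_prob_def)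
    qed
  qed
qed

lemma run_distr_unique:
  fixes \<delta> :: "'q::countable \<Rightarrow> 'a::finite \<Rightarrow> 'q pmf"
  assumes "sets M = sets (stream_space (count_space UNIV))" and "prob_space M"
    and "\<And>xs. emeasure M (sstart UNIV xs) = ennreal (cyl_prob \<delta> \<sigma> q xs)"
  shows "M = run_distr \<delta> \<sigma> q"
  by (rule stream_space_eq_sstart[of UNIV])
     (auto simp: assms sets_run_distr prob_space_run_distr emeasure_run_distr_sstart)

lemma run_measure_eq_run_distr:
  fixes \<delta> :: "'q::countable \<Rightarrow> 'a::finite \<Rightarrow> 'q pmf"
  shows "run_measure \<delta> \<sigma> q = run_distr \<delta> \<sigma> q"
  unfolding run_measure_def
  by (rule the_equality)
     (auto simp: sets_run_distr prob_space_run_distr emeasure_run_distr_sstart intro: run_distr_unique)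

lemma Pr_eq_measure_run_distr:
  fixes \<delta> :: "'q::countable \<Rightarrow> 'a::finite \<Rightarrow> 'q pmf"
  shows "Pr \<delta> \<sigma> q W = measure (run_distr \<delta> \<sigma> q) W"
  by (simp add: Pr_def run_measure_eq_run_distr)

lemma Pr_nonneg: "0 \<le> Pr \<delta> \<sigma> q W"
  by (simp add: Pr_def)

lemma Pr_le_1:
  fixes \<delta> :: "'q::countable \<Rightarrow> 'a::finite \<Rightarrow> 'q pmf"
  shows "Pr \<delta> \<sigma> q W \<le> 1"
  using prob_space.prob_le_1[OF prob_space_run_distr] by (simp add: Pr_eq_measure_run_distr)

section \<open>Mixing strategies\<close>

definition strat_prob :: "('q,'a) strat \<Rightarrow> ('q,'a) hist \<Rightarrow> real" where
  "strat_prob \<sigma> h = (\<Prod>i<length (snd h). pmf (\<sigma> (fst h, take i (snd h))) (fst (snd h ! i)))"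

definition trans_prob :: "('q \<Rightarrow> 'a \<Rightarrow> 'q pmf) \<Rightarrow> ('q,'a) hist \<Rightarrow> real" where
  "trans_prob \<delta> h =
     (\<Prod>i<length (snd h). pmf (\<delta> (hlast (fst h, take i (snd h))) (fst (snd h ! i))) (snd (snd h ! i)))"

lemma hist_prob_eq_strat_prob_mult_trans_prob: "hist_prob \<delta> \<sigma> h = strat_prob \<sigma> h * trans_prob \<delta> h"
  unfolding hist_prob_def strat_prob_def trans_prob_def prod.distrib[symmetric]
  by (auto intro!: prod.cong simp: Let_def split_beta)

lemma strat_prob_nonneg: "0 \<le> strat_prob \<sigma> h"
  unfolding strat_prob_def by (auto intro!: prod_nonneg)

lemma strat_prob_Nil [simp]: "strat_prob \<sigma> (q, []) = 1"
  by (simp add: strat_prob_def)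

lemma strat_prob_snoc:
  "strat_prob \<sigma> (q, xs @ [x]) = strat_prob \<sigma> (q, xs) * pmf (\<sigma> (q, xs)) (fst x)"
proof -
  have "(\<Prod>i<length xs. pmf (\<sigma> (q, take i (xs @ [x]))) (fst ((xs @ [x]) ! i))) = strat_prob \<sigma> (q, xs)"
    unfolding strat_prob_def by (auto intro!: prod.cong simp: nth_append)
  then show ?thesis
    by (simp add: strat_prob_def prod.lessThan_Suc)
qed

(* After history h, follow \<sigma>\<^sub>1 with the posterior probability that \<sigma>\<^sub>1 was drawn (with prior p).
   If h has probability 0 under both strategies the weight is 0 / 0 = 0; any choice would do. *)
definition mix_strat :: "real \<Rightarrow> ('q,'a) strat \<Rightarrow> ('q,'a) strat \<Rightarrow> ('q,'a) strat" where
  "mix_strat p \<sigma>\<^sub>1 \<sigma>\<^sub>2 h =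
     mix_pmf (p * strat_prob \<sigma>\<^sub>1 h / (p * strat_prob \<sigma>\<^sub>1 h + (1 - p) * strat_prob \<sigma>\<^sub>2 h)) (\<sigma>\<^sub>1 h) (\<sigma>\<^sub>2 h)"

lemma strat_prob_mix_strat:
  assumes "0 \<le> p" and "p \<le> 1"
  shows "strat_prob (mix_strat p \<sigma>\<^sub>1 \<sigma>\<^sub>2) (q, xs) = p * strat_prob \<sigma>\<^sub>1 (q, xs) + (1 - p) * strat_prob \<sigma>\<^sub>2 (q, xs)"
proof (induction xs rule: rev_induct)
  case (snoc x xs)
  define s where "s = p * strat_prob \<sigma>\<^sub>1 (q, xs)"
  define t where "t = (1 - p) * strat_prob \<sigma>\<^sub>2 (q, xs)"
  have "0 \<le> s" "0 \<le> t"
    using assms by (simp_all add: s_def t_def strat_prob_nonneg)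
  have "strat_prob (mix_strat p \<sigma>\<^sub>1 \<sigma>\<^sub>2) (q, xs @ [x]) =
      strat_prob (mix_strat p \<sigma>\<^sub>1 \<sigma>\<^sub>2) (q, xs) * pmf (mix_strat p \<sigma>\<^sub>1 \<sigma>\<^sub>2 (q, xs)) (fst x)"
    by (rule strat_prob_snoc)
  also have "\<dots> = (s + t) * pmf (mix_pmf (s / (s + t)) (\<sigma>\<^sub>1 (q, xs)) (\<sigma>\<^sub>2 (q, xs))) (fst x)"
    unfolding snoc.IH by (simp add: mix_strat_def s_def t_def)
  also have "\<dots> = s * pmf (\<sigma>\<^sub>1 (q, xs)) (fst x) + t * pmf (\<sigma>\<^sub>2 (q, xs)) (fst x)"
    using \<open>0 \<le> s\<close> \<open>0 \<le> t\<close> by (rule pmf_mix_pmf_weighted)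
  finally show ?case
    by (simp add: strat_prob_snoc s_def t_def)
qed simp

lemma hist_prob_mix_strat:
  assumes "0 \<le> p" and "p \<le> 1"
  shows "hist_prob \<delta> (mix_strat p \<sigma>\<^sub>1 \<sigma>\<^sub>2) h = p * hist_prob \<delta> \<sigma>\<^sub>1 h + (1 - p) * hist_prob \<delta> \<sigma>\<^sub>2 h"
proof -
  have mix: "strat_prob (mix_strat p \<sigma>\<^sub>1 \<sigma>\<^sub>2) h = p * strat_prob \<sigma>\<^sub>1 h + (1 - p) * strat_prob \<sigma>\<^sub>2 h"
    using strat_prob_mix_strat[OF assms, of \<sigma>\<^sub>1 \<sigma>\<^sub>2 "fst h" "snd h"] by simp
  show ?thesis
    unfolding hist_prob_eq_strat_prob_mult_trans_prob mix by (simp add: algebra_simps)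
qed

lemma cyl_prob_mix_strat:
  assumes "0 \<le> p" and "p \<le> 1"
  shows "cyl_prob \<delta> (mix_strat p \<sigma>\<^sub>1 \<sigma>\<^sub>2) q xs = p * cyl_prob \<delta> \<sigma>\<^sub>1 q xs + (1 - p) * cyl_prob \<delta> \<sigma>\<^sub>2 q xs"
  unfolding cyl_prob_def
  by (auto split: list.splits simp: hist_prob_mix_strat[OF assms] sum.distrib sum_distrib_left)

lemma run_distr_mix_strat:
  fixes \<delta> :: "'q::countable \<Rightarrow> 'a::finite \<Rightarrow> 'q pmf"
  assumes "0 \<le> p" and "p \<le> 1"
  shows "run_distr \<delta> (mix_strat p \<sigma>\<^sub>1 \<sigma>\<^sub>2) q = mix_measure p (run_distr \<delta> \<sigma>\<^sub>1 q) (run_distr \<delta> \<sigma>\<^sub>2 q)"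
proof (rule sym, rule run_distr_unique)
  note run_distr_facts = prob_space_run_distr sets_run_distr
  show "sets (mix_measure p (run_distr \<delta> \<sigma>\<^sub>1 q) (run_distr \<delta> \<sigma>\<^sub>2 q)) = sets (stream_space (count_space UNIV))"
    by (simp add: sets_mix_measure run_distr_facts)
  show "prob_space (mix_measure p (run_distr \<delta> \<sigma>\<^sub>1 q) (run_distr \<delta> \<sigma>\<^sub>2 q))"
    by (simp add: prob_space_mix_measure run_distr_facts)
  fix xs
  have "emeasure (mix_measure p (run_distr \<delta> \<sigma>\<^sub>1 q) (run_distr \<delta> \<sigma>\<^sub>2 q)) (sstart UNIV xs) =
      ennreal p * ennreal (cyl_prob \<delta> \<sigma>\<^sub>1 q xs) + ennreal (1 - p) * ennreal (cyl_prob \<delta> \<sigma>\<^sub>2 q xs)"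
    using assms by (simp add: emeasure_mix_measure run_distr_facts emeasure_run_distr_sstart)
  also have "\<dots> = ennreal (cyl_prob \<delta> (mix_strat p \<sigma>\<^sub>1 \<sigma>\<^sub>2) q xs)"
    using assms cyl_prob_nonneg[of \<delta> \<sigma>\<^sub>1 q xs] cyl_prob_nonneg[of \<delta> \<sigma>\<^sub>2 q xs]
    by (simp add: cyl_prob_mix_strat ennreal_plus ennreal_mult)
  finally show "emeasure (mix_measure p (run_distr \<delta> \<sigma>\<^sub>1 q) (run_distr \<delta> \<sigma>\<^sub>2 q)) (sstart UNIV xs) =
      ennreal (cyl_prob \<delta> (mix_strat p \<sigma>\<^sub>1 \<sigma>\<^sub>2) q xs)" .
qed

lemma Pr_mix_strat:
  fixes \<delta> :: "'q::countable \<Rightarrow> 'a::finite \<Rightarrow> 'q pmf"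
  assumes "0 \<le> p" and "p \<le> 1"
  shows "Pr \<delta> (mix_strat p \<sigma>\<^sub>1 \<sigma>\<^sub>2) q W = p * Pr \<delta> \<sigma>\<^sub>1 q W + (1 - p) * Pr \<delta> \<sigma>\<^sub>2 q W"
  using assms
  by (simp add: Pr_eq_measure_run_distr run_distr_mix_strat measure_mix_measure prob_space_run_distr
      sets_run_distr)

theorem mainTheorem5:
  fixes \<Gamma> :: "'e::finite \<Rightarrow> 'q::finite \<Rightarrow> 'a::finite \<Rightarrow> 'q pmf"
    and q :: 'q and f :: "'q \<Rightarrow> nat"
  shows "val_uni \<Gamma> q (parity f) = (INF b. val_pr \<Gamma> q b (parity f))"
  unfolding val_uni_def val_pr_def
proof (rule SUP_Min_eq_INF_SUP_pmf_weighted_sum)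
  show "\<bar>Pr (\<Gamma> e) \<sigma> q (parity f)\<bar> \<le> 1" for \<sigma> e
    using Pr_nonneg[of "\<Gamma> e" \<sigma> q "parity f"] Pr_le_1[of "\<Gamma> e" \<sigma> q "parity f"] by (simp add: abs_le_iff)
  show "\<exists>\<sigma>. \<forall>e. Pr (\<Gamma> e) \<sigma> q (parity f) = u * Pr (\<Gamma> e) \<sigma>\<^sub>1 q (parity f) + (1 - u) * Pr (\<Gamma> e) \<sigma>\<^sub>2 q (parity f)"
    if "0 \<le> u" "u \<le> 1" for \<sigma>\<^sub>1 \<sigma>\<^sub>2 u
    using Pr_mix_strat[OF that] by blast
qed

end
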